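(* Let $\vdash\subseteq Sqt$ satisfy (A), (Mon), (Cut), (Com), ($\bot$), ($\wedge$I), ($\wedge$E), ($\to$0), ($\to$1), ($\to$2). Then: (1) if $\vdash$ satisfies (Prop$^-$), $\mathfrak M^c_\vdash\in\mathcal D_{P-}$; (2) if $\vdash$ satisfies (Tran) and (Prop$_{tr}$), $\mathfrak M^c_\vdash\in\mathcal D_{\mathbf V}$; (3) if $\vdash$ satisfies (Sym1), (Sym2), (Prop$_{sy}$), $\mathfrak M^c_\vdash\in\mathcal D_{\mathbf B^p}$; (4) if $\vdash$ satisfies (Refl), (Sym1), (Sym2), (Prop$_{sy}$), $\mathfrak M^c_\vdash\in\mathcal D_{\mathbf O}$; (5) if $\vdash$ satisfies (Tran), (Sym1), (Sym2), (Prop$_{tr}$), $\mathfrak M^c_\vdash\in\mathcal D_{\mathbf{KB4}^p}$; (6) if $\vdash$ satisfies (Refl), (Tran), (Prop$_{tr}$), $\mathfrak M^c_\vdash\in\mathcal D_{\mathbf I}$; (7) if $\vdash$ satisfies (Refl), (Sym1), (Sym2), (Tran), (Prop$_{tr}$), $\mathfrak M^c_\vdash\in\mathcal D_{\mathbf C}$.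
   Context: $Form$: $\varphi::=p\mid\bot\mid(\varphi\wedge\varphi)\mid(\varphi\to\varphi)$ over a countable set $P0$ ($\wedge$ left-associative, binds tighter than $\to$). A model is $(W,R,V)$, $W\neq\emptyset$, $R\subseteq W\times W$, $V:P0\to\wp(W)$. For $X\subseteq W$: $-X=W\setminus X$, $R[X]=\{t:\exists s\in X,\ sRt\}$, $R^\Box(X)=\{s:\forall t\,(sRt\Rightarrow t\in X)\}$. A proposition of $(W,R)$ is $X\subseteq W$ with $R[X]\cap R^\Box(R[X])\subseteq X$; an interpretation is a model with every $V(p)$ a proposition. $\mathcal D_{P-}$: models with $V(p)\subseteq R^\Box(-R^\Box(\emptyset)\cup V(p))$ for all $p$; $\mathcal D_{\mathbf B^p}$, $\mathcal D_{\mathbf V}$, $\mathcal D_{\mathbf{KB4}^p}$, $\mathcal D_{\mathbf I}$, $\mathcal D_{\mathbf O}$, $\mathcal D_{\mathbf C}$: interpretations whose relation is respectively symmetric; transitive; symmetric and transitive; reflexive and transitive; reflexive and symmetric; reflexive, symmetric and transitive. Sequents: $(\Gamma,\varphi)$ with $\Gamma\subseteq Form$; $\Gamma\vdash\varphi$ means $(\Gamma,\varphi)\in\vdash$; $\psi\vdash\varphi$ means $\{\psi\}\vdash\varphi$; $\vdash\varphi$ means $\emptyset\vdash\varphi$. Rules (all $\Gamma,\Delta\subseteq Form$, $p\in P0$, formulas): (A) $\Gamma\cup\{\varphi\}\vdash\varphi$; (Mon) $\Gamma\subseteq\Delta$, $\Gamma\vdash\varphi\Rightarrow\Delta\vdash\varphi$;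 (Cut) $\Gamma\cup\{\psi\}\vdash\varphi$, $\Delta\vdash\psi\Rightarrow\Gamma\cup\Delta\vdash\varphi$; (Com) $\Gamma\vdash\varphi\Rightarrow\Gamma'\vdash\varphi$ for a finite $\Gamma'\subseteq\Gamma$; ($\bot$) $\bot\vdash\varphi$; ($\wedge$I) $\{\varphi,\psi\}\vdash\varphi\wedge\psi$; ($\wedge$E) $\varphi\wedge\psi\vdash\varphi$, $\varphi\wedge\psi\vdash\psi$; ($\to$0) $\vdash\varphi\to\varphi$; ($\to$1) $\Gamma\vdash\varphi\Rightarrow\{\psi\to\chi:\chi\in\Gamma\}\vdash\psi\to\varphi$; ($\to$2) $\{\varphi\to\psi,\psi\to\chi\}\vdash\varphi\to\chi$; (Refl) $\{\varphi,\varphi\to\psi\}\vdash\psi$; (Tran) $\varphi\to\psi\vdash(\bot\to\bot)\to(\varphi\to\psi)$; (Sym1) $\Gamma\cup\{\psi\}\vdash\chi$ and $\Gamma\cup\{(\varphi\to\psi)\to\bot\}\vdash\chi\Rightarrow\Gamma\cup\{\varphi\}\vdash\chi$; (Sym2) $\{\alpha\wedge\psi\to\chi,\alpha\wedge((\varphi\to\psi)\to\bot)\to\chi\}\vdash\alpha\wedge\varphi\to\chi$; (Prop$^-$) $p\vdash((\bot\to\bot)\to\bot)\to p$; (Prop$_{tr}$) $p\vdash(\bot\to\bot)\to p$; (Prop$_{sy}$) $p\vdash((p\to\bot)\to\bot)\to p$. $\Gamma$ is $\vdash$-consistent iff $\Gamma\nvdash\varphi$ for some $\varphi$; $\vdash$-deduction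 closed iff $\Gamma\vdash\psi\Rightarrow\psi\in\Gamma$. For $n\ge2$, $\vdash$ satisfies $(\alpha,\{\beta_1,\dots,\beta_n\})$ iff (i) for all $\Gamma,\varphi$: if $\Gamma\cup\{\beta_i\}\vdash\varphi$ for all $i$ then $\Gamma\cup\{\alpha\}\vdash\varphi$, and (ii) for all $\varphi,\psi_1,\dots,\psi_n$: $\{\psi_i\wedge\beta_i\to\varphi:1\le i\le n\}\vdash\psi_1\wedge\dots\wedge\psi_n\wedge\alpha\to\varphi$. $\Gamma$ is $\vdash$-prime iff whenever $\vdash$ satisfies $(\alpha,\{\beta_1,\dots,\beta_n\})$ ($n\ge2$) and $\alpha\in\Gamma$, some $\beta_i\in\Gamma$. $\Gamma R_\to\Delta$ iff $\varphi\to\psi\in\Gamma$ and $\varphi\in\Delta$ imply $\psi\in\Delta$. Canonical model $\mathfrak M^c_\vdash=(W^c_\vdash,R^c_\vdash,V^c_\vdash)$: $W^c_\vdash$ the set of $\vdash$-consistent, deduction closed, prime subsets of $Form$; $R^c_\vdash=R_\to\cap(W^c_\vdash\times W^c_\vdash)$; $V^c_\vdash(p)=\{\Gamma\in W^c_\vdash:p\in\Gamma\}$. *)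

theory Defs
  imports Main "HOL-Library.Countable"
begin

datatype 'a form = Atom 'a | Bot | Conj "'a form" "'a form" | Imp "'a form" "'a form"

type_synonym 'a cons_rel = "'a form set \<Rightarrow> 'a form \<Rightarrow> bool"

fun conj_list :: "'a form list \<Rightarrow> 'a form" where
  "conj_list [] = Bot"
| "conj_list (\<psi> # \<psi>s) = foldl Conj \<psi> \<psi>s"

definition rule_A :: "'a cons_rel \<Rightarrow> bool" where
  "rule_A D \<longleftrightarrow> (\<forall>\<Gamma> \<phi>. D (\<Gamma> \<union> {\<phi>}) \<phi>)"
definition rule_Mon :: "'a cons_rel \<Rightarrow> bool" where
  "rule_Mon D \<longleftrightarrow> (\<forall>\<Gamma> \<Delta> \<phi>. \<Gamma> \<subseteq> \<Delta> \<and> D \<Gamma> \<phi> \<longrightarrow> D \<Delta> \<phi>)"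
definition rule_Cut :: "'a cons_rel \<Rightarrow> bool" where
  "rule_Cut D \<longleftrightarrow> (\<forall>\<Gamma> \<Delta> \<phi> \<psi>. D (\<Gamma> \<union> {\<psi>}) \<phi> \<and> D \<Delta> \<psi> \<longrightarrow> D (\<Gamma> \<union> \<Delta>) \<phi>)"
definition rule_Com :: "'a cons_rel \<Rightarrow> bool" where
  "rule_Com D \<longleftrightarrow> (\<forall>\<Gamma> \<phi>. D \<Gamma> \<phi> \<longrightarrow> (\<exists>\<Gamma>'. finite \<Gamma>' \<and> \<Gamma>' \<subseteq> \<Gamma> \<and> D \<Gamma>' \<phi>))"
definition rule_Bot :: "'a cons_rel \<Rightarrow> bool" where
  "rule_Bot D \<longleftrightarrow> (\<forall>\<phi>. D {Bot} \<phi>)"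
definition rule_ConjI :: "'a cons_rel \<Rightarrow> bool" where
  "rule_ConjI D \<longleftrightarrow> (\<forall>\<phi> \<psi>. D {\<phi>, \<psi>} (Conj \<phi> \<psi>))"
definition rule_ConjE :: "'a cons_rel \<Rightarrow> bool" where
  "rule_ConjE D \<longleftrightarrow> (\<forall>\<phi> \<psi>. D {Conj \<phi> \<psi>} \<phi> \<and> D {Conj \<phi> \<psi>} \<psi>)"
definition rule_Imp0 :: "'a cons_rel \<Rightarrow> bool" where
  "rule_Imp0 D \<longleftrightarrow> (\<forall>\<phi>. D {} (Imp \<phi> \<phi>))"
definition rule_Imp1 :: "'a cons_rel \<Rightarrow> bool" where
  "rule_Imp1 D \<longleftrightarrow> (\<forall>\<Gamma> \<phi> \<psi>. D \<Gamma> \<phi> \<longrightarrow> D {Imp \<psi> \<chi> | \<chi>. \<chi> \<in> \<Gamma>} (Imp \<psi> \<phi>))"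
definition rule_Imp2 :: "'a cons_rel \<Rightarrow> bool" where
  "rule_Imp2 D \<longleftrightarrow> (\<forall>\<phi> \<psi> \<chi>. D {Imp \<phi> \<psi>, Imp \<psi> \<chi>} (Imp \<phi> \<chi>))"
definition rule_Refl :: "'a cons_rel \<Rightarrow> bool" where
  "rule_Refl D \<longleftrightarrow> (\<forall>\<phi> \<psi>. D {\<phi>, Imp \<phi> \<psi>} \<psi>)"
definition rule_Tran :: "'a cons_rel \<Rightarrow> bool" where
  "rule_Tran D \<longleftrightarrow> (\<forall>\<phi> \<psi>. D {Imp \<phi> \<psi>} (Imp (Imp Bot Bot) (Imp \<phi> \<psi>)))"
definition rule_Sym1 :: "'a cons_rel \<Rightarrow> bool" where
  "rule_Sym1 D \<longleftrightarrow> (\<forall>\<Gamma> \<phi> \<psi> \<chi>. D (\<Gamma> \<union> {\<psi>}) \<chi> \<and> D (\<Gamma> \<union> {Imp (Imp \<phi> \<psi>) Bot}) \<chi>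
                       \<longrightarrow> D (\<Gamma> \<union> {\<phi>}) \<chi>)"
definition rule_Sym2 :: "'a cons_rel \<Rightarrow> bool" where
  "rule_Sym2 D \<longleftrightarrow> (\<forall>\<alpha> \<phi> \<psi> \<chi>.
     D {Imp (Conj \<alpha> \<psi>) \<chi>, Imp (Conj \<alpha> (Imp (Imp \<phi> \<psi>) Bot)) \<chi>} (Imp (Conj \<alpha> \<phi>) \<chi>))"
definition rule_PropMinus :: "'a cons_rel \<Rightarrow> bool" where
  "rule_PropMinus D \<longleftrightarrow> (\<forall>p. D {Atom p} (Imp (Imp (Imp Bot Bot) Bot) (Atom p)))"
definition rule_PropTr :: "'a cons_rel \<Rightarrow> bool" where
  "rule_PropTr D \<longleftrightarrow> (\<forall>p. D {Atom p} (Imp (Imp Bot Bot) (Atom p)))"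
definition rule_PropSy :: "'a cons_rel \<Rightarrow> bool" where
  "rule_PropSy D \<longleftrightarrow> (\<forall>p. D {Atom p} (Imp (Imp (Imp (Atom p) Bot) Bot) (Atom p)))"

definition consistent :: "'a cons_rel \<Rightarrow> 'a form set \<Rightarrow> bool" where
  "consistent D \<Gamma> \<longleftrightarrow> (\<exists>\<phi>. \<not> D \<Gamma> \<phi>)"
definition deduction_closed :: "'a cons_rel \<Rightarrow> 'a form set \<Rightarrow> bool" where
  "deduction_closed D \<Gamma> \<longleftrightarrow> (\<forall>\<psi>. D \<Gamma> \<psi> \<longrightarrow> \<psi> \<in> \<Gamma>)"

text \<open>D satisfies (alpha, {beta_1,...,beta_n}), n >= 2; the beta_i are given as a list.\<close>
definition satisfies_pair :: "'a cons_rel \<Rightarrow> 'a form \<Rightarrow> 'a form list \<Rightarrow> bool" where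
  "satisfies_pair D \<alpha> \<beta>s \<longleftrightarrow> length \<beta>s \<ge> 2 \<and>
     (\<forall>\<Gamma> \<phi>. (\<forall>\<beta>\<in>set \<beta>s. D (\<Gamma> \<union> {\<beta>}) \<phi>) \<longrightarrow> D (\<Gamma> \<union> {\<alpha>}) \<phi>) \<and>
     (\<forall>\<phi> \<psi>s. length \<psi>s = length \<beta>s \<longrightarrow>
        D {Imp (Conj (\<psi>s ! i) (\<beta>s ! i)) \<phi> | i. i < length \<beta>s}
          (Imp (Conj (conj_list \<psi>s) \<alpha>) \<phi>))"

definition prime :: "'a cons_rel \<Rightarrow> 'a form set \<Rightarrow> bool" where
  "prime D \<Gamma> \<longleftrightarrow> (\<forall>\<alpha> \<beta>s. satisfies_pair D \<alpha> \<beta>s \<and> \<alpha> \<in> \<Gamma> \<longrightarrow> (\<exists>\<beta>\<in>set \<beta>s. \<beta> \<in> \<Gamma>))"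

definition R_imp :: "'a form set \<Rightarrow> 'a form set \<Rightarrow> bool" where
  "R_imp \<Gamma> \<Delta> \<longleftrightarrow> (\<forall>\<phi> \<psi>. Imp \<phi> \<psi> \<in> \<Gamma> \<and> \<phi> \<in> \<Delta> \<longrightarrow> \<psi> \<in> \<Delta>)"

definition Wc :: "'a cons_rel \<Rightarrow> 'a form set set" where
  "Wc D = {\<Gamma>. consistent D \<Gamma> \<and> deduction_closed D \<Gamma> \<and> prime D \<Gamma>}"
definition Rc :: "'a cons_rel \<Rightarrow> ('a form set \<times> 'a form set) set" where
  "Rc D = {(\<Gamma>, \<Delta>). \<Gamma> \<in> Wc D \<and> \<Delta> \<in> Wc D \<and> R_imp \<Gamma> \<Delta>}"
definition Vc :: "'a cons_rel \<Rightarrow> 'a \<Rightarrow> 'a form set set" where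
  "Vc D p = {\<Gamma> \<in> Wc D. Atom p \<in> \<Gamma>}"

definition is_model :: "'w set \<Rightarrow> ('w \<times> 'w) set \<Rightarrow> ('a \<Rightarrow> 'w set) \<Rightarrow> bool" where
  "is_model W R V \<longleftrightarrow> W \<noteq> {} \<and> R \<subseteq> W \<times> W \<and> (\<forall>p. V p \<subseteq> W)"

definition Rimg :: "('w \<times> 'w) set \<Rightarrow> 'w set \<Rightarrow> 'w set" where
  "Rimg R X = {t. \<exists>s\<in>X. (s, t) \<in> R}"
definition Rbox :: "'w set \<Rightarrow> ('w \<times> 'w) set \<Rightarrow> 'w set \<Rightarrow> 'w set" where
  "Rbox W R X = {s \<in> W. \<forall>t. (s, t) \<in> R \<longrightarrow> t \<in> X}"

definition is_proposition :: "'w set \<Rightarrow> ('w \<times> 'w) set \<Rightarrow> 'w set \<Rightarrow> bool" where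
  "is_proposition W R X \<longleftrightarrow> X \<subseteq> W \<and> Rimg R X \<inter> Rbox W R (Rimg R X) \<subseteq> X"

definition is_interpretation :: "'w set \<Rightarrow> ('w \<times> 'w) set \<Rightarrow> ('a \<Rightarrow> 'w set) \<Rightarrow> bool" where
  "is_interpretation W R V \<longleftrightarrow> is_model W R V \<and> (\<forall>p. is_proposition W R (V p))"

definition in_D_Pminus :: "'w set \<Rightarrow> ('w \<times> 'w) set \<Rightarrow> ('a \<Rightarrow> 'w set) \<Rightarrow> bool" where
  "in_D_Pminus W R V \<longleftrightarrow> is_model W R V \<and>
     (\<forall>p. V p \<subseteq> Rbox W R ((W - Rbox W R {}) \<union> V p))"

definition in_D_Bp :: "'w set \<Rightarrow> ('w \<times> 'w) set \<Rightarrow> ('a \<Rightarrow> 'w set) \<Rightarrow> bool" where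
  "in_D_Bp W R V \<longleftrightarrow> is_interpretation W R V \<and> sym R"
definition in_D_V :: "'w set \<Rightarrow> ('w \<times> 'w) set \<Rightarrow> ('a \<Rightarrow> 'w set) \<Rightarrow> bool" where
  "in_D_V W R V \<longleftrightarrow> is_interpretation W R V \<and> trans R"
definition in_D_KB4p :: "'w set \<Rightarrow> ('w \<times> 'w) set \<Rightarrow> ('a \<Rightarrow> 'w set) \<Rightarrow> bool" where
  "in_D_KB4p W R V \<longleftrightarrow> is_interpretation W R V \<and> sym R \<and> trans R"
definition in_D_I :: "'w set \<Rightarrow> ('w \<times> 'w) set \<Rightarrow> ('a \<Rightarrow> 'w set) \<Rightarrow> bool" where
  "in_D_I W R V \<longleftrightarrow> is_interpretation W R V \<and> refl_on W R \<and> trans R"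
definition in_D_O :: "'w set \<Rightarrow> ('w \<times> 'w) set \<Rightarrow> ('a \<Rightarrow> 'w set) \<Rightarrow> bool" where
  "in_D_O W R V \<longleftrightarrow> is_interpretation W R V \<and> refl_on W R \<and> sym R"
definition in_D_C :: "'w set \<Rightarrow> ('w \<times> 'w) set \<Rightarrow> ('a \<Rightarrow> 'w set) \<Rightarrow> bool" where
  "in_D_C W R V \<longleftrightarrow> is_interpretation W R V \<and> refl_on W R \<and> sym R \<and> trans R"

end

theory Submission
  imports Defs
begin

text \<open>
  Zorn's lemma for families of finite character extends every set that does not derive \<phi> to a
  prime deduction-closed one, so the canonical frame is nonempty. The heart of the argument is the
  existence of successors: if \<phi> \<rightarrow> \<chi> \<notin> \<Delta>, a maximal \<Theta> such that \<Delta> contains no implication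
  from \<phi> conjoined with finitely many members of \<Theta> to \<chi> is an R-successor of \<Delta> containing \<phi> but
  not \<chi>; clause (ii) of the pair conditions is what makes such a \<Theta> prime. The frame conditions
  then follow rule by rule: (Refl) gives reflexivity, (Tran) gives transitivity since \<bottom> \<rightarrow> \<bottom> lies
  in every world, (Sym1) and (Sym2) say that \<phi> is split by {\<psi>, (\<phi> \<rightarrow> \<psi>) \<rightarrow> \<bottom>}, which gives
  symmetry, and the (Prop) rules make the valuations propositions.
\<close>

declare conj_list.simps [simp del]

lemma finite_character_maximal:
  assumes finite_character: "\<And>X. X \<in> F \<longleftrightarrow> (\<forall>G. finite G \<longrightarrow> G \<subseteq> X \<longrightarrow> G \<in> F)"
    and "A \<in> F"
  shows "\<exists>M\<in>F. A \<subseteq> M \<and> (\<forall>X\<in>F. M \<subseteq> X \<longrightarrow> X = M)"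
proof -
  let ?F = "{X \<in> F. A \<subseteq> X}"
  have "\<exists>M\<in>?F. \<forall>X\<in>?F. M \<subseteq> X \<longrightarrow> X = M"
  proof (rule subset_Zorn_nonempty)
    show "?F \<noteq> {}" using \<open>A \<in> F\<close> by blast
    fix C assume "C \<noteq> {}" and chain: "subset.chain ?F C"
    have CF: "C \<subseteq> ?F" using chain by (simp add: subset_chain_def)
    have "G \<in> F" if "finite G" "G \<subseteq> \<Union>C" for G
    proof -
      obtain X where "X \<in> C" "G \<subseteq> X"
        using finite_subset_Union_chain[OF \<open>finite G\<close> \<open>G \<subseteq> \<Union>C\<close> \<open>C \<noteq> {}\<close> chain] by blast
      with CF have "X \<in> F" by auto
      with \<open>G \<subseteq> X\<close> \<open>finite G\<close> show ?thesis using finite_character[of X] by simp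
    qed
    then have "\<Union>C \<in> F" using finite_character[of "\<Union>C"] by simp
    moreover have "A \<subseteq> \<Union>C" using CF \<open>C \<noteq> {}\<close> by blast
    ultimately show "\<Union>C \<in> ?F" by simp
  qed
  then obtain M where M: "M \<in> ?F" and maximal: "\<forall>X\<in>?F. M \<subseteq> X \<longrightarrow> X = M" ..
  have "X = M" if "X \<in> F" "M \<subseteq> X" for X
    using maximal M that by auto
  with M show ?thesis by auto
qed

section \<open>Derived rules\<close>

locale consequence_relation =
  fixes D :: "'a cons_rel"
  assumes A: "rule_A D" and Mon: "rule_Mon D" and Cut: "rule_Cut D" and Com: "rule_Com D"
    and Bot: "rule_Bot D" and ConjI: "rule_ConjI D" and ConjE: "rule_ConjE D"
    and Imp0: "rule_Imp0 D" and Imp1: "rule_Imp1 D" and Imp2: "rule_Imp2 D"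
begin

lemma derives_member: "\<phi> \<in> \<Gamma> \<Longrightarrow> D \<Gamma> \<phi>"
  using A unfolding rule_A_def by (metis insert_absorb insert_is_Un sup_commute)

lemma derives_mono: "D \<Gamma> \<phi> \<Longrightarrow> \<Gamma> \<subseteq> \<Delta> \<Longrightarrow> D \<Delta> \<phi>"
  using Mon unfolding rule_Mon_def by blast

lemma derives_cut: "D (insert \<psi> \<Gamma>) \<phi> \<Longrightarrow> D \<Gamma> \<psi> \<Longrightarrow> D \<Gamma> \<phi>"
  using Cut unfolding rule_Cut_def by (metis Un_absorb insert_is_Un sup_commute)

lemma derives_finite: "D \<Gamma> \<phi> \<Longrightarrow> \<exists>\<Gamma>'. finite \<Gamma>' \<and> \<Gamma>' \<subseteq> \<Gamma> \<and> D \<Gamma>' \<phi>"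
  using Com unfolding rule_Com_def by blast

lemma derives_trans:
  assumes "\<forall>\<psi>\<in>\<Delta>. D \<Gamma> \<psi>" and "D \<Delta> \<phi>"
  shows "D \<Gamma> \<phi>"
proof -
  obtain \<Delta>' where "finite \<Delta>'" "\<Delta>' \<subseteq> \<Delta>" "D \<Delta>' \<phi>"
    using derives_finite[OF \<open>D \<Delta> \<phi>\<close>] by blast
  have "D (\<Gamma> \<union> \<Theta>) \<phi> \<Longrightarrow> D \<Gamma> \<phi>" if "finite \<Theta>" "\<Theta> \<subseteq> \<Delta>" for \<Theta>
    using that
  proof (induction \<Theta> rule: finite_induct)
    case (insert \<psi> \<Theta>)
    have "D (insert \<psi> (\<Gamma> \<union> \<Theta>)) \<phi>" using insert.prems(1) by simp
    moreover have "D (\<Gamma> \<union> \<Theta>) \<psi>"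
      using assms(1) insert.prems(2) by (auto intro: derives_mono[of \<Gamma>])
    ultimately show ?case using insert.IH insert.prems(2) derives_cut by simp
  qed simp
  then show ?thesis
    using \<open>finite \<Delta>'\<close> \<open>\<Delta>' \<subseteq> \<Delta>\<close> \<open>D \<Delta>' \<phi>\<close> derives_mono[of \<Delta>' \<phi> "\<Gamma> \<union> \<Delta>'"] by simp
qed

lemma derives_Bot: "Bot \<in> \<Gamma> \<Longrightarrow> D \<Gamma> \<phi>"
  using Bot derives_mono[of "{Bot}" \<phi> \<Gamma>] unfolding rule_Bot_def by simp

lemma derives_Conj_iff: "D \<Gamma> (Conj \<phi> \<psi>) \<longleftrightarrow> D \<Gamma> \<phi> \<and> D \<Gamma> \<psi>"
proof
  assume "D \<Gamma> (Conj \<phi> \<psi>)"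
  moreover have "D {Conj \<phi> \<psi>} \<phi>" "D {Conj \<phi> \<psi>} \<psi>"
    using ConjE unfolding rule_ConjE_def by auto
  ultimately show "D \<Gamma> \<phi> \<and> D \<Gamma> \<psi>"
    using derives_trans[of "{Conj \<phi> \<psi>}" \<Gamma>] by blast
next
  assume "D \<Gamma> \<phi> \<and> D \<Gamma> \<psi>"
  moreover have "D {\<phi>, \<psi>} (Conj \<phi> \<psi>)"
    using ConjI unfolding rule_ConjI_def by auto
  ultimately show "D \<Gamma> (Conj \<phi> \<psi>)"
    using derives_trans[of "{\<phi>, \<psi>}" \<Gamma>] by blast
qed

lemma derives_foldl_Conj_iff:
  "D \<Gamma> (foldl Conj \<phi> \<psi>s) \<longleftrightarrow> (\<forall>\<chi>\<in>insert \<phi> (set \<psi>s). D \<Gamma> \<chi>)"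
  by (induction \<psi>s arbitrary: \<phi>) (auto simp: derives_Conj_iff)

lemma derives_conj_list_iff:
  "\<psi>s \<noteq> [] \<Longrightarrow> D \<Gamma> (conj_list \<psi>s) \<longleftrightarrow> (\<forall>\<chi>\<in>set \<psi>s. D \<Gamma> \<chi>)"
  by (cases \<psi>s) (simp_all add: derives_foldl_Conj_iff conj_list.simps)

lemma conj_list_derives: "\<psi>s \<noteq> [] \<Longrightarrow> D (set \<psi>s) \<phi> \<Longrightarrow> D {conj_list \<psi>s} \<phi>"
  using derives_trans[of "set \<psi>s" "{conj_list \<psi>s}" \<phi>] derives_member[of "conj_list \<psi>s"]
  by (simp add: derives_conj_list_iff)

lemma conj_list_derives_member: "\<psi> \<in> set \<psi>s \<Longrightarrow> D {conj_list \<psi>s} \<psi>"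
  using conj_list_derives[of \<psi>s \<psi>] derives_member[of \<psi> "set \<psi>s"] by (metis empty_iff empty_set)

lemma derives_Imp: "D {\<phi>} \<psi> \<Longrightarrow> D \<Gamma> (Imp \<phi> \<psi>)"
proof -
  assume "D {\<phi>} \<psi>"
  then have "D {Imp \<phi> \<phi>} (Imp \<phi> \<psi>)"
    using Imp1[unfolded rule_Imp1_def, rule_format, of "{\<phi>}" \<psi> \<phi>] by simp
  moreover have "D \<Gamma> (Imp \<phi> \<phi>)"
    using Imp0 derives_mono[of "{}" "Imp \<phi> \<phi>" \<Gamma>] unfolding rule_Imp0_def by simp
  ultimately show ?thesis
    using derives_trans[of "{Imp \<phi> \<phi>}" \<Gamma>] by blast
qed

lemma derives_Imp_strengthen: "D {\<phi>} \<psi> \<Longrightarrow> D {Imp \<psi> \<chi>} (Imp \<phi> \<chi>)"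
  using derives_Imp[of \<phi> \<psi> "{Imp \<psi> \<chi>}"] derives_member[of "Imp \<psi> \<chi>"] Imp2
    derives_trans[of "{Imp \<phi> \<psi>, Imp \<psi> \<chi>}" "{Imp \<psi> \<chi>}" "Imp \<phi> \<chi>"]
  unfolding rule_Imp2_def by simp

lemma deduction_closed_mem: "deduction_closed D \<Gamma> \<Longrightarrow> \<Delta> \<subseteq> \<Gamma> \<Longrightarrow> D \<Delta> \<phi> \<Longrightarrow> \<phi> \<in> \<Gamma>"
  unfolding deduction_closed_def using derives_mono by metis

lemma deduction_closed_Imp_trans:
  "deduction_closed D \<Gamma> \<Longrightarrow> Imp \<phi> \<psi> \<in> \<Gamma> \<Longrightarrow> Imp \<psi> \<chi> \<in> \<Gamma> \<Longrightarrow> Imp \<phi> \<chi> \<in> \<Gamma>"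
  using Imp2 deduction_closed_mem[of \<Gamma> "{Imp \<phi> \<psi>, Imp \<psi> \<chi>}"] unfolding rule_Imp2_def by simp

lemma deduction_closed_Imp_refl: "deduction_closed D \<Gamma> \<Longrightarrow> Imp \<phi> \<phi> \<in> \<Gamma>"
  using Imp0 deduction_closed_mem[of \<Gamma> "{}"] unfolding rule_Imp0_def by simp

lemma deduction_closed_Imp_strengthen:
  "deduction_closed D \<Gamma> \<Longrightarrow> Imp \<psi> \<chi> \<in> \<Gamma> \<Longrightarrow> D {\<phi>} \<psi> \<Longrightarrow> Imp \<phi> \<chi> \<in> \<Gamma>"
  using deduction_closed_mem[of \<Gamma> "{Imp \<psi> \<chi>}"] derives_Imp_strengthen by simp

lemma deduction_closed_Imp_of_derives:
  assumes "deduction_closed D \<Gamma>" and "\<forall>\<psi>\<in>\<Delta>. Imp \<phi> \<psi> \<in> \<Gamma>" and "D (insert \<phi> \<Delta>) \<chi>"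
  shows "Imp \<phi> \<chi> \<in> \<Gamma>"
proof (rule deduction_closed_mem[OF assms(1)])
  show "D {Imp \<phi> \<psi> | \<psi>. \<psi> \<in> insert \<phi> \<Delta>} (Imp \<phi> \<chi>)"
    using Imp1[unfolded rule_Imp1_def, rule_format, OF assms(3)] .
  have "Imp \<phi> \<phi> \<in> \<Gamma>"
    using deduction_closed_Imp_refl assms(1) .
  then show "{Imp \<phi> \<psi> | \<psi>. \<psi> \<in> insert \<phi> \<Delta>} \<subseteq> \<Gamma>"
    using assms(2) by blast
qed

lemma lindenbaum:
  assumes "\<not> D \<Gamma> \<phi>"
  shows "\<exists>M. \<Gamma> \<subseteq> M \<and> \<not> D M \<phi> \<and> deduction_closed D M \<and> prime D M"
proof -
  let ?F = "{\<Delta>. \<not> D \<Delta> \<phi>}"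
  have finite_character: "\<Delta> \<in> ?F \<longleftrightarrow> (\<forall>G. finite G \<longrightarrow> G \<subseteq> \<Delta> \<longrightarrow> G \<in> ?F)" for \<Delta>
    using derives_finite[of \<Delta> \<phi>] derives_mono[of _ \<phi> \<Delta>] by auto
  then obtain M where "M \<in> ?F" "\<Gamma> \<subseteq> M" and maximal: "\<forall>\<Delta>\<in>?F. M \<subseteq> \<Delta> \<longrightarrow> \<Delta> = M"
    using finite_character_maximal[of ?F \<Gamma>, OF finite_character] assms by blast
  then have "\<not> D M \<phi>" by simp
  have extend: "D (insert \<psi> M) \<phi>" if "\<psi> \<notin> M" for \<psi>
    using maximal that by auto
  have "deduction_closed D M"
    unfolding deduction_closed_def
    using extend derives_cut \<open>\<not> D M \<phi>\<close> by metis
  moreover have "prime D M"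
    unfolding prime_def satisfies_pair_def
    using extend \<open>\<not> D M \<phi>\<close> by (metis Un_insert_right insert_absorb sup_bot_right)
  ultimately show ?thesis
    using \<open>\<Gamma> \<subseteq> M\<close> \<open>\<not> D M \<phi>\<close> by blast
qed

lemma Wc_nonempty: "consistent D {} \<Longrightarrow> Wc D \<noteq> {}"
  using lindenbaum unfolding consistent_def Wc_def by blast

lemma Wc_deduction_closed: "\<Gamma> \<in> Wc D \<Longrightarrow> deduction_closed D \<Gamma>"
  unfolding Wc_def by simp

lemma Wc_derives_mem: "\<Gamma> \<in> Wc D \<Longrightarrow> \<Delta> \<subseteq> \<Gamma> \<Longrightarrow> D \<Delta> \<phi> \<Longrightarrow> \<phi> \<in> \<Gamma>"
  using Wc_deduction_closed deduction_closed_mem by blast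

lemma Wc_prime: "\<Gamma> \<in> Wc D \<Longrightarrow> satisfies_pair D \<alpha> \<beta>s \<Longrightarrow> \<alpha> \<in> \<Gamma> \<Longrightarrow> \<exists>\<beta>\<in>set \<beta>s. \<beta> \<in> \<Gamma>"
  unfolding Wc_def prime_def by blast

lemma Bot_notin_Wc: "\<Gamma> \<in> Wc D \<Longrightarrow> Bot \<notin> \<Gamma>"
  unfolding Wc_def consistent_def using derives_Bot by blast

lemma Rc_iff: "(\<Gamma>, \<Delta>) \<in> Rc D \<longleftrightarrow> \<Gamma> \<in> Wc D \<and> \<Delta> \<in> Wc D \<and> R_imp \<Gamma> \<Delta>"
  unfolding Rc_def by simp

lemma Rc_mp: "(\<Gamma>, \<Delta>) \<in> Rc D \<Longrightarrow> Imp \<phi> \<psi> \<in> \<Gamma> \<Longrightarrow> \<phi> \<in> \<Delta> \<Longrightarrow> \<psi> \<in> \<Delta>"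
  unfolding Rc_iff R_imp_def by blast

end

section \<open>Successors in the canonical frame\<close>

definition avoids :: "'a form set \<Rightarrow> 'a form \<Rightarrow> 'a form \<Rightarrow> 'a form set \<Rightarrow> bool" where
  "avoids \<Delta> \<phi> \<chi> \<Theta> \<longleftrightarrow> (\<forall>\<theta>s. set \<theta>s \<subseteq> \<Theta> \<longrightarrow> Imp (conj_list (\<phi> # \<theta>s)) \<chi> \<notin> \<Delta>)"

lemma avoids_finite_character:
  "avoids \<Delta> \<phi> \<chi> \<Theta> \<longleftrightarrow> (\<forall>G. finite G \<longrightarrow> G \<subseteq> \<Theta> \<longrightarrow> avoids \<Delta> \<phi> \<chi> G)"
  unfolding avoids_def by (meson finite_set order_refl order_trans)

context consequence_relation
begin

lemma avoids_Imp_notin: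
  assumes "deduction_closed D \<Delta>" and "avoids \<Delta> \<phi> \<chi> \<Theta>" and "set \<theta>s \<subseteq> \<Theta>"
    and "\<forall>\<beta>\<in>B. Imp (conj_list (\<phi> # \<theta>s)) \<beta> \<in> \<Delta>" and "D (insert (conj_list (\<phi> # \<theta>s)) B) \<psi>"
  shows "Imp \<psi> \<chi> \<notin> \<Delta>"
proof
  assume "Imp \<psi> \<chi> \<in> \<Delta>"
  moreover have "Imp (conj_list (\<phi> # \<theta>s)) \<psi> \<in> \<Delta>"
    using deduction_closed_Imp_of_derives assms(1,4,5) .
  ultimately have "Imp (conj_list (\<phi> # \<theta>s)) \<chi> \<in> \<Delta>"
    using deduction_closed_Imp_trans assms(1) by blast
  then show False
    using assms(2,3) unfolding avoids_def by blast
qed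

lemma avoids_derived:
  assumes "deduction_closed D \<Delta>" and "avoids \<Delta> \<phi> \<chi> \<Theta>" and "\<forall>\<psi>\<in>\<Theta>'. D (insert \<phi> \<Theta>) \<psi>"
  shows "avoids \<Delta> \<phi> \<chi> \<Theta>'"
  unfolding avoids_def
proof (intro allI impI)
  fix \<theta>s assume "set \<theta>s \<subseteq> \<Theta>'"
  then have "D (insert \<phi> \<Theta>) (conj_list (\<phi> # \<theta>s))"
    using assms(3) derives_member[of \<phi> "insert \<phi> \<Theta>"] by (subst derives_conj_list_iff) auto
  then obtain G where "finite G" "G \<subseteq> insert \<phi> \<Theta>" "D G (conj_list (\<phi> # \<theta>s))"
    using derives_finite by blast
  moreover obtain \<gamma>s where "set \<gamma>s = G - {\<phi>}"
    using finite_list[of "G - {\<phi>}"] \<open>finite G\<close> by blast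
  ultimately have "set \<gamma>s \<subseteq> \<Theta>" and "D {conj_list (\<phi> # \<gamma>s)} (conj_list (\<phi> # \<theta>s))"
    using conj_list_derives[of "\<phi> # \<gamma>s"] derives_mono[of G _ "set (\<phi> # \<gamma>s)"] by auto
  then show "Imp (conj_list (\<phi> # \<theta>s)) \<chi> \<notin> \<Delta>"
    using avoids_Imp_notin[of \<Delta> \<phi> \<chi> \<Theta> \<gamma>s "{}"] assms(1,2) by simp
qed

lemma avoids_insert_Imp:
  assumes "deduction_closed D \<Delta>" and "avoids \<Delta> \<phi> \<chi> \<Theta>" and "Imp \<alpha> \<beta> \<in> \<Delta>" and "\<alpha> \<in> \<Theta>"
  shows "avoids \<Delta> \<phi> \<chi> (insert \<beta> \<Theta>)"
  unfolding avoids_def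
proof (intro allI impI)
  fix \<theta>s assume \<theta>s: "set \<theta>s \<subseteq> insert \<beta> \<Theta>"
  define \<theta>s' where "\<theta>s' = \<alpha> # removeAll \<beta> \<theta>s"
  let ?X = "conj_list (\<phi> # \<theta>s')"
  have "set \<theta>s' \<subseteq> \<Theta>"
    using \<theta>s assms(4) unfolding \<theta>s'_def by auto
  have "Imp ?X \<beta> \<in> \<Delta>"
    using deduction_closed_Imp_strengthen[OF assms(1,3)] conj_list_derives_member
    unfolding \<theta>s'_def by simp
  moreover have "D (insert ?X {\<beta>}) (conj_list (\<phi> # \<theta>s))"
  proof (subst derives_conj_list_iff, simp, intro ballI)
    fix \<psi> assume "\<psi> \<in> set (\<phi> # \<theta>s)"
    then have "\<psi> = \<beta> \<or> \<psi> \<in> set (\<phi> # \<theta>s')"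
      unfolding \<theta>s'_def by auto
    then show "D (insert ?X {\<beta>}) \<psi>"
    proof
      assume "\<psi> \<in> set (\<phi> # \<theta>s')"
      then have "D {?X} \<psi>" by (rule conj_list_derives_member)
      then show ?thesis by (rule derives_mono) auto
    qed (simp add: derives_member)
  qed
  ultimately show "Imp (conj_list (\<phi> # \<theta>s)) \<chi> \<notin> \<Delta>"
    using avoids_Imp_notin[OF assms(1,2) \<open>set \<theta>s' \<subseteq> \<Theta>\<close>, of "{\<beta>}"] by simp
qed

lemma avoids_prime:
  assumes dc: "deduction_closed D \<Delta>" and avoids: "avoids \<Delta> \<phi> \<chi> M"
    and pair: "satisfies_pair D \<alpha> \<beta>s" and "\<alpha> \<in> M"
  shows "\<exists>\<beta>\<in>set \<beta>s. avoids \<Delta> \<phi> \<chi> (insert \<beta> M)"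
proof (rule ccontr)
  assume "\<not> ?thesis"
  then have "\<forall>\<beta>\<in>set \<beta>s. \<exists>\<theta>s. set \<theta>s \<subseteq> insert \<beta> M \<and> Imp (conj_list (\<phi> # \<theta>s)) \<chi> \<in> \<Delta>"
    unfolding avoids_def by blast
  then obtain \<theta>s where \<theta>s: "\<And>\<beta>. \<beta> \<in> set \<beta>s \<Longrightarrow> set (\<theta>s \<beta>) \<subseteq> insert \<beta> M"
    "\<And>\<beta>. \<beta> \<in> set \<beta>s \<Longrightarrow> Imp (conj_list (\<phi> # \<theta>s \<beta>)) \<chi> \<in> \<Delta>"
    by metis
  define \<psi> where "\<psi> \<beta> = conj_list (\<phi> # removeAll \<beta> (\<theta>s \<beta>))" for \<beta>
  have \<psi>_Imp: "Imp (Conj (\<psi> \<beta>) \<beta>) \<chi> \<in> \<Delta>" if "\<beta> \<in> set \<beta>s" for \<beta>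
  proof (rule deduction_closed_Imp_strengthen[OF dc \<theta>s(2)[OF that]])
    have "D {Conj (\<psi> \<beta>) \<beta>} (\<psi> \<beta>)" "D {Conj (\<psi> \<beta>) \<beta>} \<beta>"
      using derives_Conj_iff[of "{Conj (\<psi> \<beta>) \<beta>}" "\<psi> \<beta>" \<beta>] derives_member[of "Conj (\<psi> \<beta>) \<beta>"]
      by auto
    then show "D {Conj (\<psi> \<beta>) \<beta>} (conj_list (\<phi> # \<theta>s \<beta>))"
      unfolding \<psi>_def by (auto simp: derives_conj_list_iff)
  qed
  have "length \<beta>s \<ge> 2"
    using pair unfolding satisfies_pair_def by blast
  have "D {Imp (Conj (map \<psi> \<beta>s ! i) (\<beta>s ! i)) \<chi> | i. i < length \<beta>s}
          (Imp (Conj (conj_list (map \<psi> \<beta>s)) \<alpha>) \<chi>)"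
    using pair unfolding satisfies_pair_def by simp
  moreover have "{Imp (Conj (map \<psi> \<beta>s ! i) (\<beta>s ! i)) \<chi> | i. i < length \<beta>s} \<subseteq> \<Delta>"
    using \<psi>_Imp by auto
  ultimately have "Imp (Conj (conj_list (map \<psi> \<beta>s)) \<alpha>) \<chi> \<in> \<Delta>"
    using deduction_closed_mem[OF dc] by blast
  moreover define \<theta>s' where "\<theta>s' = \<alpha> # concat (map (\<lambda>\<beta>. removeAll \<beta> (\<theta>s \<beta>)) \<beta>s)"
  have "set \<theta>s' \<subseteq> M"
    using \<theta>s(1) \<open>\<alpha> \<in> M\<close> unfolding \<theta>s'_def by auto
  moreover have "D {conj_list (\<phi> # \<theta>s')} (Conj (conj_list (map \<psi> \<beta>s)) \<alpha>)"
  proof -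
    have member: "D {conj_list (\<phi> # \<theta>s')} \<gamma>" if "\<gamma> \<in> set (\<phi> # \<theta>s')" for \<gamma>
      using that by (rule conj_list_derives_member)
    have "D {conj_list (\<phi> # \<theta>s')} (\<psi> \<beta>)" if "\<beta> \<in> set \<beta>s" for \<beta>
    proof -
      have "set (\<phi> # removeAll \<beta> (\<theta>s \<beta>)) \<subseteq> set (\<phi> # \<theta>s')"
        using that unfolding \<theta>s'_def by auto
      then show ?thesis
        unfolding \<psi>_def using member by (auto simp: derives_conj_list_iff)
    qed
    moreover have "map \<psi> \<beta>s \<noteq> []"
      using \<open>length \<beta>s \<ge> 2\<close> by auto
    ultimately show ?thesis
      using member[of \<alpha>] by (auto simp: derives_Conj_iff derives_conj_list_iff \<theta>s'_def)
  qed
  ultimately show False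
    using avoids_Imp_notin[OF dc avoids, of \<theta>s' "{}"] by simp
qed

lemma maximal_avoiding_Rc_successor:
  assumes "\<Delta> \<in> Wc D" and avoids: "avoids \<Delta> \<phi> \<chi> M"
    and maximal: "\<And>\<psi>. avoids \<Delta> \<phi> \<chi> (insert \<psi> M) \<Longrightarrow> \<psi> \<in> M"
  shows "(\<Delta>, M) \<in> Rc D" and "\<phi> \<in> M" and "\<chi> \<notin> M"
proof -
  have dc: "deduction_closed D \<Delta>"
    using Wc_deduction_closed assms(1) .
  have derived: "\<psi> \<in> M" if "D (insert \<phi> M) \<psi>" for \<psi>
    using maximal avoids_derived[OF dc avoids, of "insert \<psi> M"] that derives_member by auto
  then show "\<phi> \<in> M"
    using derives_member by simp
  have "deduction_closed D M"
    unfolding deduction_closed_def using derived derives_mono by blast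
  show "\<chi> \<notin> M"
  proof
    assume "\<chi> \<in> M"
    have "D {conj_list [\<phi>, \<chi>]} \<chi>"
      by (rule conj_list_derives_member) simp
    then show False
      using avoids_Imp_notin[OF dc avoids, of "[\<chi>]" "{}" \<chi>] \<open>\<chi> \<in> M\<close> deduction_closed_Imp_refl[OF dc]
      by simp
  qed
  then have "consistent D M"
    using \<open>deduction_closed D M\<close> unfolding consistent_def deduction_closed_def by blast
  moreover have "prime D M"
    unfolding prime_def using avoids_prime[OF dc avoids] maximal by blast
  moreover have "R_imp \<Delta> M"
    unfolding R_imp_def using avoids_insert_Imp[OF dc avoids] maximal by blast
  ultimately show "(\<Delta>, M) \<in> Rc D"
    using assms(1) \<open>deduction_closed D M\<close> unfolding Rc_iff Wc_def by blast
qed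

lemma exists_Rc_successor:
  assumes "\<Delta> \<in> Wc D" and "Imp \<phi> \<chi> \<notin> \<Delta>"
  shows "\<exists>\<Theta>. (\<Delta>, \<Theta>) \<in> Rc D \<and> \<phi> \<in> \<Theta> \<and> \<chi> \<notin> \<Theta>"
proof -
  let ?F = "{\<Theta>. avoids \<Delta> \<phi> \<chi> \<Theta>}"
  have "{} \<in> ?F"
    using assms(2) unfolding avoids_def by (simp add: conj_list.simps)
  moreover have finite_character: "\<Theta> \<in> ?F \<longleftrightarrow> (\<forall>G. finite G \<longrightarrow> G \<subseteq> \<Theta> \<longrightarrow> G \<in> ?F)" for \<Theta>
    using avoids_finite_character by simp
  ultimately obtain M where "M \<in> ?F" and maximal: "\<forall>\<Theta>\<in>?F. M \<subseteq> \<Theta> \<longrightarrow> \<Theta> = M"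
    using finite_character_maximal[of ?F "{}", OF finite_character] by blast
  then have "avoids \<Delta> \<phi> \<chi> M" and "\<And>\<psi>. avoids \<Delta> \<phi> \<chi> (insert \<psi> M) \<Longrightarrow> \<psi> \<in> M"
    by blast+
  then show ?thesis
    using maximal_avoiding_Rc_successor[OF assms(1)] by blast
qed

section \<open>Frame conditions\<close>

lemma is_model_canonical: "consistent D {} \<Longrightarrow> is_model (Wc D) (Rc D) (Vc D)"
  unfolding is_model_def Rc_def Vc_def using Wc_nonempty by auto

lemma refl_on_Rc:
  assumes "rule_Refl D"
  shows "refl_on (Wc D) (Rc D)"
proof (rule refl_onI)
  fix \<Gamma> assume "\<Gamma> \<in> Wc D"
  moreover have "R_imp \<Gamma> \<Gamma>"
    unfolding R_imp_def
  proof (intro allI impI)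
    fix \<phi> \<psi> assume "Imp \<phi> \<psi> \<in> \<Gamma> \<and> \<phi> \<in> \<Gamma>"
    then show "\<psi> \<in> \<Gamma>"
      using assms Wc_derives_mem[OF \<open>\<Gamma> \<in> Wc D\<close>, of "{\<phi>, Imp \<phi> \<psi>}" \<psi>]
      unfolding rule_Refl_def by simp
  qed
  ultimately show "(\<Gamma>, \<Gamma>) \<in> Rc D"
    unfolding Rc_iff by simp
qed

lemma trans_Rc:
  assumes "rule_Tran D"
  shows "trans (Rc D)"
proof (rule transI)
  fix \<Gamma> \<Delta> \<Theta> assume R1: "(\<Gamma>, \<Delta>) \<in> Rc D" and R2: "(\<Delta>, \<Theta>) \<in> Rc D"
  have "\<psi> \<in> \<Theta>" if "Imp \<phi> \<psi> \<in> \<Gamma>" "\<phi> \<in> \<Theta>" for \<phi> \<psi>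
  proof -
    have "Imp (Imp Bot Bot) (Imp \<phi> \<psi>) \<in> \<Gamma>"
      using assms R1 \<open>Imp \<phi> \<psi> \<in> \<Gamma>\<close> Wc_derives_mem[of \<Gamma> "{Imp \<phi> \<psi>}"]
      unfolding rule_Tran_def Rc_iff by simp
    moreover have "Imp Bot Bot \<in> \<Delta>"
      using R1 deduction_closed_Imp_refl Wc_deduction_closed unfolding Rc_iff by blast
    ultimately have "Imp \<phi> \<psi> \<in> \<Delta>"
      using Rc_mp[OF R1] by blast
    then show ?thesis
      using Rc_mp[OF R2] \<open>\<phi> \<in> \<Theta>\<close> by blast
  qed
  then show "(\<Gamma>, \<Theta>) \<in> Rc D"
    using R1 R2 unfolding Rc_iff R_imp_def by blast
qed

lemma satisfies_pair_Sym:
  assumes "rule_Sym1 D" and "rule_Sym2 D"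
  shows "satisfies_pair D \<phi> [\<psi>, Imp (Imp \<phi> \<psi>) Bot]"
  unfolding satisfies_pair_def
proof (intro conjI allI impI)
  let ?N = "Imp (Imp \<phi> \<psi>) Bot"
  show "D (\<Gamma> \<union> {\<phi>}) \<chi>" if "\<forall>\<beta>\<in>set [\<psi>, ?N]. D (\<Gamma> \<union> {\<beta>}) \<chi>" for \<Gamma> \<chi>
    using assms(1)[unfolded rule_Sym1_def, rule_format, of \<Gamma> \<psi> \<chi> \<phi>] that by simp
  fix \<chi> :: "'a form" and \<psi>s :: "'a form list"
  assume "length \<psi>s = length [\<psi>, ?N]"
  then obtain a b where \<psi>s: "\<psi>s = [a, b]"
    by (auto simp: numeral_2_eq_2 length_Suc_conv)
  have instances: "{Imp (Conj (\<psi>s ! i) ([\<psi>, ?N] ! i)) \<chi> | i. i < length [\<psi>, ?N]}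
      = {Imp (Conj a \<psi>) \<chi>, Imp (Conj b ?N) \<chi>}"
    unfolding \<psi>s by (auto simp: less_Suc_eq) (metis nth_Cons_0, metis nth_Cons_Suc nth_Cons_0)
  have "D {Conj (Conj a b) \<psi>} (Conj a \<psi>)" "D {Conj (Conj a b) ?N} (Conj b ?N)"
    using derives_member[of "Conj (Conj a b) \<psi>" "{Conj (Conj a b) \<psi>}"]
      derives_member[of "Conj (Conj a b) ?N" "{Conj (Conj a b) ?N}"]
    by (simp_all add: derives_Conj_iff)
  then have "\<forall>\<gamma>\<in>{Imp (Conj (Conj a b) \<psi>) \<chi>, Imp (Conj (Conj a b) ?N) \<chi>}.
      D {Imp (Conj a \<psi>) \<chi>, Imp (Conj b ?N) \<chi>} \<gamma>"
    using derives_Imp_strengthen derives_mono by blast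
  moreover have "D {Imp (Conj (Conj a b) \<psi>) \<chi>, Imp (Conj (Conj a b) ?N) \<chi>} (Imp (Conj (Conj a b) \<phi>) \<chi>)"
    using assms(2) unfolding rule_Sym2_def by blast
  ultimately have "D {Imp (Conj a \<psi>) \<chi>, Imp (Conj b ?N) \<chi>} (Imp (Conj (Conj a b) \<phi>) \<chi>)"
    by (rule derives_trans)
  then show "D {Imp (Conj (\<psi>s ! i) ([\<psi>, ?N] ! i)) \<chi> | i. i < length [\<psi>, ?N]}
      (Imp (Conj (conj_list \<psi>s) \<phi>) \<chi>)"
    unfolding instances by (simp add: \<psi>s conj_list.simps)
qed (simp)

lemma sym_Rc:
  assumes "rule_Sym1 D" and "rule_Sym2 D"
  shows "sym (Rc D)"
proof (rule symI)
  fix \<Gamma> \<Delta> assume R: "(\<Gamma>, \<Delta>) \<in> Rc D"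
  then have "\<Gamma> \<in> Wc D" "\<Delta> \<in> Wc D"
    unfolding Rc_iff by simp_all
  have "\<psi> \<in> \<Gamma>" if "Imp \<phi> \<psi> \<in> \<Delta>" "\<phi> \<in> \<Gamma>" for \<phi> \<psi>
  proof -
    have "\<psi> \<in> \<Gamma> \<or> Imp (Imp \<phi> \<psi>) Bot \<in> \<Gamma>"
      using Wc_prime[OF \<open>\<Gamma> \<in> Wc D\<close> satisfies_pair_Sym[OF assms] \<open>\<phi> \<in> \<Gamma>\<close>] by simp
    moreover have "Imp (Imp \<phi> \<psi>) Bot \<notin> \<Gamma>"
      using Rc_mp[OF R _ \<open>Imp \<phi> \<psi> \<in> \<Delta>\<close>] Bot_notin_Wc[OF \<open>\<Delta> \<in> Wc D\<close>] by blast
    ultimately show ?thesis by blast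
  qed
  then show "(\<Delta>, \<Gamma>) \<in> Rc D"
    using \<open>\<Gamma> \<in> Wc D\<close> \<open>\<Delta> \<in> Wc D\<close> unfolding Rc_iff R_imp_def by blast
qed

lemma Rc_preserves_Atom:
  assumes "rule_PropTr D" and R: "(\<Gamma>, \<Delta>) \<in> Rc D" and "Atom p \<in> \<Gamma>"
  shows "Atom p \<in> \<Delta>"
proof -
  have "Imp (Imp Bot Bot) (Atom p) \<in> \<Gamma>"
    using assms Wc_derives_mem[of \<Gamma> "{Atom p}"] unfolding rule_PropTr_def Rc_iff by simp
  moreover have "Imp Bot Bot \<in> \<Delta>"
    using R deduction_closed_Imp_refl Wc_deduction_closed unfolding Rc_iff by blast
  ultimately show ?thesis
    using Rc_mp[OF R] by blast
qed

lemma is_proposition_Vc_PropTr: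
  assumes "rule_PropTr D"
  shows "is_proposition (Wc D) (Rc D) (Vc D p)"
proof -
  have "Rimg (Rc D) (Vc D p) \<subseteq> Vc D p"
    using Rc_preserves_Atom[OF assms] unfolding Rimg_def Vc_def Rc_iff by blast
  then show ?thesis
    unfolding is_proposition_def Vc_def by blast
qed

lemma is_proposition_Vc_PropSy:
  assumes "rule_PropSy D" and "sym (Rc D)"
  shows "is_proposition (Wc D) (Rc D) (Vc D p)"
  unfolding is_proposition_def
proof (intro conjI subsetI)
  show "\<Gamma> \<in> Wc D" if "\<Gamma> \<in> Vc D p" for \<Gamma>
    using that unfolding Vc_def by simp
  fix \<Delta> assume \<Delta>: "\<Delta> \<in> Rimg (Rc D) (Vc D p) \<inter> Rbox (Wc D) (Rc D) (Rimg (Rc D) (Vc D p))"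
  then obtain \<Gamma> where R: "(\<Gamma>, \<Delta>) \<in> Rc D" and "Atom p \<in> \<Gamma>"
    unfolding Rimg_def Vc_def by blast
  let ?N = "Imp (Atom p) Bot"
  have "Imp (Imp ?N Bot) (Atom p) \<in> \<Gamma>"
    using assms(1) R \<open>Atom p \<in> \<Gamma>\<close> Wc_derives_mem[of \<Gamma> "{Atom p}"]
    unfolding rule_PropSy_def Rc_iff by simp
  moreover have "Imp ?N Bot \<in> \<Delta>"
  proof (rule ccontr)
    assume "Imp ?N Bot \<notin> \<Delta>"
    then obtain \<Theta> where "(\<Delta>, \<Theta>) \<in> Rc D" and "?N \<in> \<Theta>"
      using exists_Rc_successor R unfolding Rc_iff by blast
    then obtain \<Gamma>' where "(\<Theta>, \<Gamma>') \<in> Rc D" and "Atom p \<in> \<Gamma>'"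
      using \<Delta> assms(2) unfolding Rbox_def Rimg_def Vc_def sym_def by blast
    then show False
      using Rc_mp \<open>?N \<in> \<Theta>\<close> Bot_notin_Wc unfolding Rc_iff by blast
  qed
  ultimately have "Atom p \<in> \<Delta>"
    using Rc_mp[OF R] by blast
  then show "\<Delta> \<in> Vc D p"
    using R unfolding Vc_def Rc_iff by simp
qed

lemma in_D_Pminus_canonical:
  assumes "rule_PropMinus D" and "consistent D {}"
  shows "in_D_Pminus (Wc D) (Rc D) (Vc D)"
  unfolding in_D_Pminus_def
proof (intro conjI allI subsetI)
  show "is_model (Wc D) (Rc D) (Vc D)"
    using is_model_canonical assms(2) .
  fix p \<Gamma> assume "\<Gamma> \<in> Vc D p"
  then have "\<Gamma> \<in> Wc D" and "Atom p \<in> \<Gamma>"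
    unfolding Vc_def by auto
  then have Imp: "Imp (Imp (Imp Bot Bot) Bot) (Atom p) \<in> \<Gamma>"
    using assms(1) Wc_derives_mem[of \<Gamma> "{Atom p}"] unfolding rule_PropMinus_def by simp
  have "\<Delta> \<in> Wc D - Rbox (Wc D) (Rc D) {} \<union> Vc D p" if R: "(\<Gamma>, \<Delta>) \<in> Rc D" for \<Delta>
  proof (cases "Atom p \<in> \<Delta>")
    case False
    then have "Imp (Imp Bot Bot) Bot \<notin> \<Delta>"
      using Rc_mp[OF R Imp] by blast
    then obtain \<Theta> where "(\<Delta>, \<Theta>) \<in> Rc D"
      using exists_Rc_successor R unfolding Rc_iff by blast
    then show ?thesis
      using R unfolding Rbox_def Rc_iff by blast
  qed (use R in \<open>simp add: Vc_def Rc_iff\<close>)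
  then show "\<Gamma> \<in> Rbox (Wc D) (Rc D) (Wc D - Rbox (Wc D) (Rc D) {} \<union> Vc D p)"
    using \<open>\<Gamma> \<in> Wc D\<close> unfolding Rbox_def by blast
qed

end

theorem mainTheorem14:
  fixes D :: "('a::countable) cons_rel"
  assumes "rule_A D" "rule_Mon D" "rule_Cut D" "rule_Com D" "rule_Bot D"
    "rule_ConjI D" "rule_ConjE D" "rule_Imp0 D" "rule_Imp1 D" "rule_Imp2 D"
    and nontriv: "consistent D {}"
  shows "(rule_PropMinus D \<longrightarrow> in_D_Pminus (Wc D) (Rc D) (Vc D))
    \<and> (rule_Tran D \<and> rule_PropTr D \<longrightarrow> in_D_V (Wc D) (Rc D) (Vc D))
    \<and> (rule_Sym1 D \<and> rule_Sym2 D \<and> rule_PropSy D \<longrightarrow> in_D_Bp (Wc D) (Rc D) (Vc D))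
    \<and> (rule_Refl D \<and> rule_Sym1 D \<and> rule_Sym2 D \<and> rule_PropSy D \<longrightarrow> in_D_O (Wc D) (Rc D) (Vc D))
    \<and> (rule_Tran D \<and> rule_Sym1 D \<and> rule_Sym2 D \<and> rule_PropTr D \<longrightarrow> in_D_KB4p (Wc D) (Rc D) (Vc D))
    \<and> (rule_Refl D \<and> rule_Tran D \<and> rule_PropTr D \<longrightarrow> in_D_I (Wc D) (Rc D) (Vc D))
    \<and> (rule_Refl D \<and> rule_Sym1 D \<and> rule_Sym2 D \<and> rule_Tran D \<and> rule_PropTr D \<longrightarrow> in_D_C (Wc D) (Rc D) (Vc D))"
proof -
  interpret consequence_relation D
    using assms(1-10) by unfold_locales
  have model: "is_model (Wc D) (Rc D) (Vc D)"
    using is_model_canonical nontriv .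
  have interpretation_PropTr: "rule_PropTr D \<Longrightarrow> is_interpretation (Wc D) (Rc D) (Vc D)"
    using model is_proposition_Vc_PropTr unfolding is_interpretation_def by blast
  have interpretation_PropSy:
    "rule_Sym1 D \<Longrightarrow> rule_Sym2 D \<Longrightarrow> rule_PropSy D \<Longrightarrow> is_interpretation (Wc D) (Rc D) (Vc D)"
    using model is_proposition_Vc_PropSy sym_Rc unfolding is_interpretation_def by blast
  show ?thesis
    using in_D_Pminus_canonical[OF _ nontriv] interpretation_PropTr interpretation_PropSy
      refl_on_Rc sym_Rc trans_Rc
    unfolding in_D_V_def in_D_Bp_def in_D_O_def in_D_KB4p_def in_D_I_def in_D_C_def
    by blast
qed

end
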